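(* Let $d\ge 1$, let $\mu\in\mathbb{R}^d$, and let $\Sigma\in\mathbb{R}^{d\times d}$ be a symmetric positive definite covariance matrix; write $\mathcal{D}=\mathcal{N}(\mu,\Sigma)$. Fix initial parameters $\theta_0\in\mathbb{R}^d$, a vector $v\in\mathbb{R}^d$, a learning rate $0<\eta<1/2$, and an integer $k\ge 1$. Define $$\theta_0^+=\theta_0-2\eta(\theta_0-v),\qquad \theta_0^-=\theta_0-2\eta(\theta_0+v),$$ and for $i=1,\dots,k$ draw $x_i^+,x_i^-$ independently from $\mathcal{D}$ (all draws mutually independent) and set $$\theta_i^+=\theta_{i-1}^+-2\eta(\theta_{i-1}^+-x_i^+),\qquad \theta_i^-=\theta_{i-1}^--2\eta(\theta_{i-1}^--x_i^-).$$ Then for every order $\alpha>1$, the R\'enyi divergence of order $\alpha$ between the distribution of $\theta_k^+$ and the distribution of $\theta_k^-$ is at most $\frac{2\alpha}{k}\,v^\top\Sigma^{-1}v$.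
   Context: This models mean estimation by per-example stochastic gradient descent on the squared $\ell_2$ loss $\|\theta-x\|^2$ (gradient $2(\theta-x)$), where a single injected example ($+v$ in one run, $-v$ in the other) is used in the very first step and all subsequent examples are fresh random samples from $\mathcal{D}$. The R\'enyi divergence of order $\alpha>1$ between distributions $P,Q$ with densities $p,q$ is $D_\alpha(P\|Q)=\frac{1}{\alpha-1}\log\int p(x)^\alpha q(x)^{1-\alpha}\,dx$. *)

theory Defs
  imports "HOL-Probability.Probability"
begin

definition sym_pos_def_mat :: "real^'n^'n \<Rightarrow> bool" where
  "sym_pos_def_mat S \<longleftrightarrow> transpose S = S \<and> (\<forall>x. x \<noteq> 0 \<longrightarrow> x \<bullet> (S *v x) > 0)"

definition mvn_density :: "real^'n \<Rightarrow> real^'n^'n \<Rightarrow> real^'n \<Rightarrow> real" where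
  "mvn_density mu S x =
     exp (- ((x - mu) \<bullet> (matrix_inv S *v (x - mu))) / 2)
       / sqrt ((2 * pi) ^ CARD('n) * det S)"

definition mvnormal :: "real^'n \<Rightarrow> real^'n^'n \<Rightarrow> (real^'n) measure" where
  "mvnormal mu S = density lborel (\<lambda>x. ennreal (mvn_density mu S x))"

text \<open>Per-example SGD on the squared loss, gradient 2(theta - x):
  starting from theta, take steps with the samples xs 1, xs 2, ..., xs i.\<close>
fun sgd_iter :: "real \<Rightarrow> real^'n \<Rightarrow> (nat \<Rightarrow> real^'n) \<Rightarrow> nat \<Rightarrow> real^'n" where
  "sgd_iter eta theta xs 0 = theta"
| "sgd_iter eta theta xs (Suc i) =
     sgd_iter eta theta xs i - (2 * eta) *\<^sub>R (sgd_iter eta theta xs i - xs (Suc i))"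

definition sgd_dist :: "real \<Rightarrow> real^'n \<Rightarrow> (real^'n) measure \<Rightarrow> nat \<Rightarrow> (real^'n) measure" where
  "sgd_dist eta theta D k = distr (PiM {1..k} (\<lambda>_. D)) borel (\<lambda>xs. sgd_iter eta theta xs k)"

definition renyi_divergence :: "real \<Rightarrow> ('a::euclidean_space) measure \<Rightarrow> 'a measure \<Rightarrow> ereal" where
  "renyi_divergence alpha P Q =
     (if \<not> absolutely_continuous Q P then \<infinity>
      else (let p = (\<lambda>x. enn2real (RN_deriv lborel P x));
                q = (\<lambda>x. enn2real (RN_deriv lborel Q x));
                I = (\<integral>\<^sup>+ x. ennreal (p x powr alpha * q x powr (1 - alpha)) \<partial>lborel)
            in if I = \<infinity> then \<infinity> else ereal (ln (enn2real I) / (alpha - 1))))"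

end

theory Submission
  imports Defs
begin

text \<open>
  Each SGD step \<open>\<theta> \<mapsto> (1 - 2\<eta>) \<theta> + 2\<eta> x\<close> is affine, and the Gaussians whose covariances are
  multiples of \<open>\<Sigma>\<close> are closed under affine maps and under convolution. By induction, both runs
  end in Gaussians \<open>N(m\<^sub>k, s\<^sub>k \<Sigma>)\<close> with the same factor
  \<open>s\<^sub>k = (2\<eta>)\<^sup>2 \<Sum>\<^sub>i\<^sub><\<^sub>k (1 - 2\<eta>)\<^sup>2\<^sup>i \<ge> k (2\<eta>)\<^sup>2 (1 - 2\<eta>)\<^sup>2\<^sup>k\<close>, and their means differ by
  \<open>(1 - 2\<eta>)\<^sup>k 4\<eta> v\<close>. The Renyi divergence of order \<open>\<alpha>\<close> between \<open>N(a, S)\<close> and \<open>N(b, S)\<close>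
  is \<open>\<alpha> (a - b)\<^sup>T S\<^sup>-\<^sup>1 (a - b) / 2\<close>, which yields the bound.

  That the density is normalised rests on the linear change of variables formula for Lebesgue
  measure. It reduces to elementary matrices: diagonal stretches, shears (Fubini in one coordinate
  plus translation invariance) and coordinate swaps (a reflection composed with three shears).
\<close>

section \<open>Matrices and quadratic forms\<close>

lemma matrix_inv_right:
  fixes A :: "'a::semiring_1^'n^'m"
  assumes "invertible A"
  shows "A ** matrix_inv A = mat 1"
  using someI_ex[OF assms[unfolded invertible_def]] unfolding matrix_inv_def by blast

lemma matrix_inv_left:
  fixes A :: "'a::semiring_1^'n^'m"
  assumes "invertible A"
  shows "matrix_inv A ** A = mat 1"
  using someI_ex[OF assms[unfolded invertible_def]] unfolding matrix_inv_def by blast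

lemma matrix_inv_unique:
  fixes A :: "'a::semiring_1^'n^'m"
  assumes "A ** B = mat 1" and "B ** A = mat 1"
  shows "matrix_inv A = B"
proof -
  have "invertible A"
    using assms invertible_def by blast
  then have "matrix_inv A = matrix_inv A ** (A ** B)"
    using assms(1) by simp
  also have "\<dots> = B"
    using matrix_inv_left[OF \<open>invertible A\<close>] by (simp add: matrix_mul_assoc)
  finally show ?thesis .
qed

lemma det_scaleR:
  fixes A :: "real^'n^'n"
  shows "det (c *\<^sub>R A) = c ^ CARD('n) * det A"
  by (simp add: det_def prod.distrib sum_distrib_left mult_ac)

lemma det_matrix_inv:
  fixes A :: "real^'n^'n"
  assumes "invertible A"
  shows "det (matrix_inv A) = inverse (det A)"
  using arg_cong[OF matrix_inv_right[OF assms], of det] by (simp add: det_mul inverse_unique)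

lemma matrix_inv_scaleR:
  fixes A :: "real^'n^'n"
  assumes "invertible A" and "c \<noteq> 0"
  shows "matrix_inv (c *\<^sub>R A) = inverse c *\<^sub>R matrix_inv A"
  using assms by (intro matrix_inv_unique)
    (simp_all add: scalar_matrix_assoc[symmetric] matrix_scalar_ac matrix_inv_left matrix_inv_right)

lemma inner_matrix_vector_symmetric:
  fixes A :: "real^'n^'n"
  assumes "transpose A = A"
  shows "x \<bullet> (A *v y) = y \<bullet> (A *v x)"
  by (metis assms dot_lmul_matrix inner_commute transpose_matrix_vector)

lemma inner_matrix_vector_congruence:
  fixes A L :: "real^'n^'n"
  shows "(L *v x) \<bullet> (A *v (L *v y)) = x \<bullet> ((transpose L ** A ** L) *v y)"
  by (metis dot_lmul_matrix inner_commute matrix_vector_mul_assoc transpose_matrix_vector)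

lemma quadratic_form_uminus:
  fixes A :: "real^'n^'n"
  shows "(- v) \<bullet> (A *v (- v)) = v \<bullet> (A *v v)"
proof -
  have "A *v (- v) = - (A *v v)"
    by (simp add: matrix_vector_mult_def vec_eq_iff sum_negf)
  then show ?thesis
    by simp
qed

lemma quadratic_form_affine_combination:
  fixes A :: "real^'n^'n"
  assumes "transpose A = A"
  shows "t * (p \<bullet> (A *v p)) + (1 - t) * (q \<bullet> (A *v q))
       = (t *\<^sub>R p + (1 - t) *\<^sub>R q) \<bullet> (A *v (t *\<^sub>R p + (1 - t) *\<^sub>R q)) + t * (1 - t) * ((p - q) \<bullet> (A *v (p - q)))"
proof -
  have sym: "q \<bullet> (A *v p) = p \<bullet> (A *v q)"
    by (rule inner_matrix_vector_symmetric[OF assms])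
  have "(t *\<^sub>R p + (1 - t) *\<^sub>R q) \<bullet> (A *v (t *\<^sub>R p + (1 - t) *\<^sub>R q))
      = t\<^sup>2 * (p \<bullet> (A *v p)) + 2 * t * (1 - t) * (p \<bullet> (A *v q)) + (1 - t)\<^sup>2 * (q \<bullet> (A *v q))"
    by (simp add: sym power2_eq_square algebra_simps)
  moreover have "(p - q) \<bullet> (A *v (p - q)) = p \<bullet> (A *v p) - 2 * (p \<bullet> (A *v q)) + q \<bullet> (A *v q)"
    by (simp add: sym algebra_simps)
  ultimately show ?thesis
    by (simp add: power2_eq_square algebra_simps)
qed

lemma quadratic_form_convolution:
  fixes A :: "real^'n^'n"
  assumes "transpose A = A" and "s1 > 0" and "s2 > 0"
  shows "u \<bullet> (A *v u) / s1 + (u - w) \<bullet> (A *v (u - w)) / s2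
    = w \<bullet> (A *v w) / (s1 + s2)
      + (u - (s1 / (s1 + s2)) *\<^sub>R w) \<bullet> (A *v (u - (s1 / (s1 + s2)) *\<^sub>R w)) / (s1 * s2 / (s1 + s2))"
proof -
  define Q where "Q v = v \<bullet> (A *v v)" for v
  define s where "s = s1 + s2"
  define t where "t = s1 / s"
  have "s > 0"
    using assms by (simp add: s_def)
  have "1 - s2 / s = t"
    using \<open>s > 0\<close> by (simp add: s_def t_def field_simps)
  moreover have "(s2 / s) *\<^sub>R u + t *\<^sub>R (u - w) = u - t *\<^sub>R w"
  proof -
    have "s2 / s + t = 1"
      using \<open>1 - s2 / s = t\<close> by simp
    then show ?thesis
      by (metis scaleR_add_left scaleR_diff_right scaleR_one add_diff_eq)
  qed
  \<comment> \<open>the affine combination identity with weight \<open>s2 / s\<close>, to be rescaled by \<open>s / (s1 s2)\<close>\<close>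
  ultimately have "(s2 / s) * Q u + t * Q (u - w) = Q (u - t *\<^sub>R w) + (s2 / s) * t * Q w"
    using quadratic_form_affine_combination[OF assms(1), of "s2 / s" u "u - w"]
    by (simp add: Q_def mult.assoc)
  moreover have "Q u / s1 + Q (u - w) / s2 = s / (s1 * s2) * ((s2 / s) * Q u + t * Q (u - w))"
    and "Q w / s + Q (u - t *\<^sub>R w) / (s1 * s2 / s) = s / (s1 * s2) * (Q (u - t *\<^sub>R w) + (s2 / s) * t * Q w)"
    using assms \<open>s > 0\<close> by (simp_all add: t_def field_simps)
  ultimately show ?thesis
    by (simp add: Q_def s_def t_def)
qed

section \<open>Symmetric positive definite matrices\<close>

lemma sym_pos_def_mat_orthogonal_spanning_set:
  fixes A :: "real^'n^'n"
  assumes A: "sym_pos_def_mat A" and "finite S"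
  shows "\<exists>B. finite B \<and> 0 \<notin> B \<and> S \<subseteq> span B \<and> pairwise (\<lambda>x y. x \<bullet> (A *v y) = 0) B"
  using \<open>finite S\<close>
proof (induction S rule: finite_induct)
  case empty
  show ?case by (intro exI[of _ "{}"]) auto
next
  case (insert a S)
  then obtain B where B: "finite B" "0 \<notin> B" "S \<subseteq> span B"
    and orth: "pairwise (\<lambda>x y. x \<bullet> (A *v y) = 0) B" by blast
  have sym: "transpose A = A" and pos: "\<And>x. x \<noteq> 0 \<Longrightarrow> x \<bullet> (A *v x) > 0"
    using A by (auto simp: sym_pos_def_mat_def)
  define p where "p = (\<Sum>b\<in>B. ((b \<bullet> (A *v a)) / (b \<bullet> (A *v b))) *\<^sub>R b)"
  define a' where "a' = a - p"
  have p: "p \<in> span B"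
    unfolding p_def by (intro span_sum span_scale span_base)
  have a'_orth: "b \<bullet> (A *v a') = 0" if "b \<in> B" for b
  proof -
    have "b \<bullet> (A *v p) = (\<Sum>c\<in>B. ((c \<bullet> (A *v a)) / (c \<bullet> (A *v c))) * (b \<bullet> (A *v c)))"
      unfolding p_def by (simp add: vec.sum matrix_vector_mult_scaleR inner_sum_right)
    also have "\<dots> = b \<bullet> (A *v a)"
    proof -
      have "b \<noteq> 0"
        using that B(2) by blast
      then have "b \<bullet> (A *v b) > 0"
        by (rule pos)
      moreover have "b \<bullet> (A *v c) = 0" if "c \<in> B - {b}" for c
        using orth that \<open>b \<in> B\<close> by (auto simp: pairwise_def)
      ultimately show ?thesis
        by (subst sum.remove[OF B(1) that]) simp
    qed
    finally show ?thesis
      by (simp add: a'_def matrix_vector_mult_diff_distrib inner_diff_right)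
  qed
  show ?case
  proof (cases "a' = 0")
    case True
    then have "a \<in> span B"
      using p by (simp add: a'_def)
    then show ?thesis
      using B orth by (intro exI[of _ B]) auto
  next
    case False
    have sub: "span B \<subseteq> span (insert a' B)"
      by (rule span_mono) auto
    have "a = a' + p"
      by (simp add: a'_def)
    also have "\<dots> \<in> span (insert a' B)"
      using p sub by (intro span_add) (auto intro: span_base)
    finally have "insert a S \<subseteq> span (insert a' B)"
      using B(3) sub by blast
    moreover have "pairwise (\<lambda>x y. x \<bullet> (A *v y) = 0) (insert a' B)"
      using orth a'_orth inner_matrix_vector_symmetric[OF sym, of a'] by (auto simp: pairwise_insert)
    ultimately show ?thesis
      using B False by (intro exI[of _ "insert a' B"]) auto
  qed
qed

lemma sym_pos_def_mat_congruent_mat_1: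
  fixes A :: "real^'n^'n"
  assumes A: "sym_pos_def_mat A"
  obtains L :: "real^'n^'n" where "transpose L ** A ** L = mat 1"
proof -
  have pos: "\<And>x. x \<noteq> 0 \<Longrightarrow> x \<bullet> (A *v x) > 0"
    using A by (auto simp: sym_pos_def_mat_def)
  obtain B where B: "finite B" "0 \<notin> B" "Basis \<subseteq> span B"
    and orth: "pairwise (\<lambda>x y. x \<bullet> (A *v y) = 0) B"
    using sym_pos_def_mat_orthogonal_spanning_set[OF A, of Basis] by auto
  have "span B = UNIV"
    using B(3) span_Basis span_mono[OF B(3)] by (auto simp: span_span)
  then have "CARD('n) \<le> card B"
    using dim_le_card[of UNIV B] B(1) by simp
  then obtain g :: "'n \<Rightarrow> real^'n" where g: "range g \<subseteq> B" "inj g"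
    using card_le_inj[of "UNIV::'n set" B] B(1) by auto
  define c where "c j = (1 / sqrt (g j \<bullet> (A *v g j))) *\<^sub>R g j" for j
  have g_pos: "g j \<bullet> (A *v g j) > 0" for j
  proof -
    have "g j \<in> B"
      using g(1) by blast
    then have "g j \<noteq> 0"
      using B(2) by metis
    then show ?thesis
      by (rule pos)
  qed
  have c: "c i \<bullet> (A *v c j) = (if i = j then 1 else 0)" for i j
  proof (cases "i = j")
    case True
    then show ?thesis
      using g_pos[of j] by (simp add: c_def matrix_vector_mult_scaleR real_sqrt_mult[symmetric])
  next
    case False
    then have "g i \<noteq> g j" "g i \<in> B" "g j \<in> B"
      using g by (auto dest: injD)
    then have "g i \<bullet> (A *v g j) = 0"
      using orth unfolding pairwise_def by blast
    then show ?thesis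
      using False by (simp add: c_def matrix_vector_mult_scaleR)
  qed
  define L :: "real^'n^'n" where "L = (\<chi> i j. c j $ i)"
  have col: "column j L = c j" for j
    by (simp add: column_def L_def vec_eq_iff)
  have entry: "(transpose L ** (A ** L)) $ i $ j = column i L \<bullet> column j (A ** L)" for i j
    by (simp add: matrix_matrix_mult_def transpose_def column_def inner_vec_def mult.commute)
  have "column j (A ** L) = A *v column j L" for j
    by (simp add: column_def matrix_matrix_mult_def matrix_vector_mult_def vec_eq_iff)
  then have "(transpose L ** A ** L) $ i $ j = c i \<bullet> (A *v c j)" for i j
    using entry by (simp add: col matrix_mul_assoc)
  then have "transpose L ** A ** L = mat 1"
    using c by (simp add: vec_eq_iff mat_def)
  then show ?thesis
    by (rule that)
qed

lemma det_congruent_mat_1: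
  fixes A L :: "real^'n^'n"
  assumes "transpose L ** A ** L = mat 1"
  shows "(det L)\<^sup>2 * det A = 1"
  using arg_cong[OF assms, of det] by (simp add: det_mul power2_eq_square mult_ac)

lemma sym_pos_def_mat_det_pos:
  fixes A :: "real^'n^'n"
  assumes "sym_pos_def_mat A"
  shows "det A > 0"
proof -
  obtain L :: "real^'n^'n" where "transpose L ** A ** L = mat 1"
    using sym_pos_def_mat_congruent_mat_1[OF assms] .
  then have "(det L)\<^sup>2 * det A = 1"
    by (rule det_congruent_mat_1)
  then show ?thesis
    using zero_less_mult_iff[of "(det L)\<^sup>2" "det A"] by auto
qed

lemma sym_pos_def_mat_invertible:
  fixes A :: "real^'n^'n"
  shows "sym_pos_def_mat A \<Longrightarrow> invertible A"
  using sym_pos_def_mat_det_pos invertible_det_nz by force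

lemma sym_pos_def_mat_matrix_inv:
  fixes A :: "real^'n^'n"
  assumes A: "sym_pos_def_mat A"
  shows "sym_pos_def_mat (matrix_inv A)"
  unfolding sym_pos_def_mat_def
proof (intro conjI allI impI)
  have inv: "invertible A" and sym: "transpose A = A"
    using A sym_pos_def_mat_invertible by (auto simp: sym_pos_def_mat_def)
  have "matrix_inv A = transpose (matrix_inv A)"
  proof (rule matrix_inv_unique)
    show "A ** transpose (matrix_inv A) = mat 1"
      using matrix_transpose_mul[of "matrix_inv A" A] by (simp add: sym matrix_inv_left[OF inv])
    show "transpose (matrix_inv A) ** A = mat 1"
      using matrix_transpose_mul[of A "matrix_inv A"] by (simp add: sym matrix_inv_right[OF inv])
  qed
  then show "transpose (matrix_inv A) = matrix_inv A"
    by simp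
  fix x :: "real^'n"
  assume "x \<noteq> 0"
  define y where "y = matrix_inv A *v x"
  have x: "x = A *v y"
    by (simp add: y_def matrix_vector_mul_assoc matrix_inv_right[OF inv])
  then have "y \<noteq> 0"
    using \<open>x \<noteq> 0\<close> by auto
  then have "y \<bullet> (A *v y) > 0"
    using A by (simp add: sym_pos_def_mat_def)
  then show "x \<bullet> (matrix_inv A *v x) > 0"
    by (simp add: x inner_commute matrix_vector_mul_assoc matrix_inv_left[OF inv])
qed

lemma sym_pos_def_mat_scaleR:
  fixes A :: "real^'n^'n"
  assumes "sym_pos_def_mat A" and "c > 0"
  shows "sym_pos_def_mat (c *\<^sub>R A)"
  using assms by (simp add: sym_pos_def_mat_def transpose_scalar scaleR_matrix_vector_assoc[symmetric])

lemma sym_pos_def_mat_quadratic_form_nonneg: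
  fixes A :: "real^'n^'n"
  shows "sym_pos_def_mat A \<Longrightarrow> x \<bullet> (A *v x) \<ge> 0"
  by (cases "x = 0") (auto simp: sym_pos_def_mat_def less_imp_le)

section \<open>Linear change of variables for Lebesgue measure\<close>

lemma borel_measurable_matrix_vector_mult [measurable]:
  fixes A :: "real^'n^'m"
  shows "(*v) A \<in> borel_measurable borel"
  by (intro borel_measurable_continuous_onI linear_continuous_on matrix_vector_mul_bounded_linear)

lemma nn_integral_lborel_affine:
  fixes f :: "'a::euclidean_space \<Rightarrow> ennreal"
  assumes "c \<noteq> 0" and [measurable]: "f \<in> borel_measurable borel"
  shows "(\<integral>\<^sup>+x. f x \<partial>lborel) = ennreal (\<bar>c\<bar> ^ DIM('a)) * (\<integral>\<^sup>+x. f (t + c *\<^sub>R x) \<partial>lborel)"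
  by (subst lborel_affine[OF assms(1), of t])
    (simp add: nn_integral_density nn_integral_distr nn_integral_cmult)

lemma sum_Basis_vec_component:
  fixes g :: "real^'n \<Rightarrow> real"
  shows "(\<Sum>b\<in>Basis. g b * b $ i) = g (axis i 1)"
  using arg_cong[OF vector_cart[of g], of "\<lambda>v. v $ i"] by simp

lemma nn_integral_lborel_shear:
  fixes h :: "real^'n \<Rightarrow> ennreal"
  assumes "m \<noteq> n" and [measurable]: "h \<in> borel_measurable borel"
  shows "(\<integral>\<^sup>+x. h (x + (c * x$n) *\<^sub>R axis m 1) \<partial>lborel) = (\<integral>\<^sup>+x. h x \<partial>lborel)"
proof -
  interpret product_sigma_finite "\<lambda>_::real^'n. lborel :: real measure" ..
  define F :: "(real^'n \<Rightarrow> real) \<Rightarrow> real^'n" where "F g = (\<Sum>b\<in>Basis. g b *\<^sub>R b)" for g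
  define e where "e = axis m (1::real)"
  have [measurable]: "F \<in> borel_measurable (\<Pi>\<^sub>M b\<in>Basis. lborel)"
    unfolding F_def by measurable
  have e: "e \<in> Basis" "axis n 1 \<noteq> e"
    using \<open>m \<noteq> n\<close> by (auto simp: e_def axis_eq_axis)
  have [measurable]: "(\<lambda>g. g (axis n (1::real))) \<in> (\<Pi>\<^sub>M b\<in>Basis. lborel) \<rightarrow>\<^sub>M lborel"
    by (rule measurable_component_singleton) simp
  have F_upd: "F (g(e := y)) = F g + (y - g e) *\<^sub>R e" for g y
    unfolding vec_eq_iff F_def
    by (simp only: vector_add_component vector_scaleR_component sum_component sum_Basis_vec_component
      real_scaleR_def)
      (auto simp: e_def axis_eq_axis, simp add: axis_def)
  have translate: "(\<integral>\<^sup>+y. h (F (g(e := y)) + t *\<^sub>R e) \<partial>lborel) = (\<integral>\<^sup>+y. h (F (g(e := y))) \<partial>lborel)" for g t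
  proof -
    have "(\<integral>\<^sup>+y. h (F (g(e := y))) \<partial>lborel) = (\<integral>\<^sup>+y. h (F (g(e := y))) \<partial>distr lborel borel ((+) t))"
      by (simp add: lborel_distr_plus)
    also have "\<dots> = (\<integral>\<^sup>+y. h (F (g(e := y)) + t *\<^sub>R e) \<partial>lborel)"
      by (simp add: nn_integral_distr F_upd algebra_simps)
    finally show ?thesis ..
  qed
  \<comment> \<open>Integrating over the \<open>m\<close>-th coordinate first, the shear is a translation.\<close>
  have "(\<integral>\<^sup>+x. h (x + (c * x$n) *\<^sub>R e) \<partial>lborel)
      = (\<integral>\<^sup>+g. h (F g + (c * g (axis n 1)) *\<^sub>R e) \<partial>(\<Pi>\<^sub>M b\<in>insert e (Basis - {e}). lborel))"
    by (subst lborel_eq) (simp add: nn_integral_distr insert_absorb e(1) F_def sum_Basis_vec_component)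
  also have "\<dots> = (\<integral>\<^sup>+g. \<integral>\<^sup>+y. h (F (g(e := y)) + (c * g (axis n 1)) *\<^sub>R e) \<partial>lborel \<partial>(\<Pi>\<^sub>M b\<in>Basis - {e}. lborel))"
    using e by (subst product_nn_integral_insert) (auto simp: insert_absorb)
  also have "\<dots> = (\<integral>\<^sup>+g. \<integral>\<^sup>+y. h (F (g(e := y))) \<partial>lborel \<partial>(\<Pi>\<^sub>M b\<in>Basis - {e}. lborel))"
    by (simp only: translate)
  also have "\<dots> = (\<integral>\<^sup>+g. h (F g) \<partial>(\<Pi>\<^sub>M b\<in>insert e (Basis - {e}). lborel))"
    using e by (subst product_nn_integral_insert) (auto simp: insert_absorb)
  also have "\<dots> = (\<integral>\<^sup>+x. h x \<partial>lborel)"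
    by (subst (2) lborel_eq) (simp add: nn_integral_distr insert_absorb e(1) F_def)
  finally show ?thesis
    by (simp add: e_def)
qed

lemma nn_integral_lborel_stretch:
  fixes h :: "real^'n \<Rightarrow> ennreal"
  assumes "\<And>i. c i \<noteq> 0" and [measurable]: "h \<in> borel_measurable borel"
  shows "(\<integral>\<^sup>+x. h x \<partial>lborel) = ennreal \<bar>prod c UNIV\<bar> * (\<integral>\<^sup>+x. h (\<chi> i. c i * x$i) \<partial>lborel)"
proof -
  define d where "d b = (\<chi> i. c i) \<bullet> b" for b :: "real^'n"
  have Basis: "Basis = range (\<lambda>i. axis i (1::real))"
    by (auto simp: Basis_vec_def)
  have d: "d (axis i 1) = c i" for i
    by (simp add: d_def inner_axis)
  have stretch: "(\<Sum>b\<in>Basis. (d b * (x \<bullet> b)) *\<^sub>R b) = (\<chi> i. c i * x$i)" for x :: "real^'n"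
    by (simp add: vec_eq_iff sum_Basis_vec_component d cart_eq_inner_axis[symmetric])
  have [measurable]: "(\<lambda>x::real^'n. \<chi> i. c i * x$i) \<in> borel_measurable borel"
    unfolding stretch[symmetric] by measurable
  have "(\<Prod>b\<in>Basis. \<bar>d b\<bar>) = \<bar>prod c UNIV\<bar>"
    by (simp add: Basis prod.reindex inj_on_def axis_eq_axis d abs_prod)
  moreover have "d b \<noteq> 0" if "b \<in> Basis" for b
    using that assms(1) by (auto simp: Basis d)
  ultimately have "lborel = density (distr lborel borel (\<lambda>x. \<chi> i. c i * x$i)) (\<lambda>_. \<bar>prod c UNIV\<bar>)"
    using lborel_affine_euclidean[where c=d and t=0] by (simp add: stretch)
  from arg_cong[OF this, of "\<lambda>M. \<integral>\<^sup>+x. h x \<partial>M"] show ?thesis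
    by (simp add: nn_integral_density nn_integral_distr nn_integral_cmult)
qed

lemma nn_integral_lborel_swap:
  fixes h :: "real^'n \<Rightarrow> ennreal"
  assumes "m \<noteq> n" and [measurable]: "h \<in> borel_measurable borel"
  shows "(\<integral>\<^sup>+x. h (\<chi> i. x $ Transposition.transpose m n i) \<partial>lborel) = (\<integral>\<^sup>+x. h x \<partial>lborel)"
proof -
  define r where "r x = (\<chi> i. (if i = n then -1 else 1) * x$i)" for x :: "real^'n"
  have r: "r x = x - (2 * x$n) *\<^sub>R axis n 1" for x
    by (auto simp: vec_eq_iff r_def axis_def)
  \<comment> \<open>\<open>(a, b) \<mapsto> (a + b, b) \<mapsto> (a + b, - a) \<mapsto> (b, - a) \<mapsto> (b, a)\<close> in coordinates \<open>m, n\<close>\<close>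
  let ?s = "\<lambda>x. x + (1 * x$n) *\<^sub>R axis m 1"
  let ?t = "\<lambda>x. x + (-1 * x$m) *\<^sub>R axis n 1"
  have "(\<chi> i. x $ Transposition.transpose m n i) = r (?s (?t (?s x)))" for x
    using \<open>m \<noteq> n\<close> by (auto simp: vec_eq_iff r_def axis_def Transposition.transpose_def)
  then have "(\<integral>\<^sup>+x. h (\<chi> i. x $ Transposition.transpose m n i) \<partial>lborel) = (\<integral>\<^sup>+x. h (r (?s (?t (?s x)))) \<partial>lborel)"
    by simp
  also have "\<dots> = (\<integral>\<^sup>+x. h (r (?s (?t x))) \<partial>lborel)"
    using \<open>m \<noteq> n\<close> by (intro nn_integral_lborel_shear) (auto simp: r)
  also have "\<dots> = (\<integral>\<^sup>+x. h (r (?s x)) \<partial>lborel)"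
    using \<open>m \<noteq> n\<close> by (intro nn_integral_lborel_shear) (auto simp: r)
  also have "\<dots> = (\<integral>\<^sup>+x. h (r x) \<partial>lborel)"
    using \<open>m \<noteq> n\<close> by (intro nn_integral_lborel_shear) (auto simp: r)
  also have "\<dots> = (\<integral>\<^sup>+x. h x \<partial>lborel)"
    using nn_integral_lborel_stretch[of "\<lambda>i. if i = n then -1 else 1" h]
    by (simp add: r_def[symmetric] prod.If_cases)
  finally show ?thesis .
qed

lemma matrix_vector_mult_swap_matrix:
  fixes m n :: "'n::finite"
  shows "(\<chi> i j. mat 1 $ i $ Transposition.transpose m n j) *v (x::real^'n) = (\<chi> i. x $ Transposition.transpose m n i)"
proof -
  have "{j. i = Transposition.transpose m n j} = {Transposition.transpose m n i}" for i
    by auto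
  then show ?thesis
    by (simp add: vec_eq_iff matrix_vector_mult_def mat_def of_bool_def[symmetric])
qed

lemma det_swap_matrix:
  fixes m n :: "'n::finite"
  assumes "m \<noteq> n"
  shows "det (\<chi> i j. mat 1 $ i $ Transposition.transpose m n j :: real^'n^'n) = -1"
  using assms det_permute_columns[OF permutes_swap_id[of m UNIV n], of "mat 1 :: real^'n^'n"]
  by (simp add: sign_swap_id)

lemma matrix_vector_mult_shear_matrix:
  fixes m n :: "'n::finite"
  assumes "m \<noteq> n"
  shows "(\<chi> i j. if i = m \<and> j = n then c else of_bool (i = j)) *v x = x + (c * x$n) *\<^sub>R axis m (1::real)"
proof -
  have "(\<chi> i j. if i = m \<and> j = n then c else of_bool (i = j)) = mat 1 + c *\<^sub>R (\<chi> i j. of_bool (i = m \<and> j = n))"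
    using assms by (auto simp: vec_eq_iff mat_def)
  moreover have "(\<chi> i j. of_bool (i = m \<and> j = n)) *v x = x$n *\<^sub>R axis m (1::real)"
    by (auto simp: vec_eq_iff matrix_vector_mult_def axis_def)
  ultimately show ?thesis
    by (simp add: matrix_vector_mult_add_rdistrib scaleR_matrix_vector_assoc[symmetric])
qed

lemma det_shear_matrix:
  fixes m n :: "'n::finite"
  assumes "m \<noteq> n"
  shows "det (\<chi> i j. if i = m \<and> j = n then c else of_bool (i = j) :: real^'n^'n) = 1"
proof -
  have "(\<chi> i j. if i = m \<and> j = n then c else of_bool (i = j)) =
      (\<chi> k. if k = m then row m (mat 1) + c *s row n (mat 1) else row k (mat 1 :: real^'n^'n))"
    using assms by (auto simp: vec_eq_iff row_def mat_def)
  then show ?thesis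
    using det_row_operation[OF assms, of "mat 1" c] by simp
qed

lemma matrix_vector_mult_diagonal:
  fixes A :: "real^'n^'n"
  assumes "\<And>i j. i \<noteq> j \<Longrightarrow> A$i$j = 0"
  shows "A *v x = (\<chi> i. A$i$i * x$i)"
proof -
  have "(\<Sum>j\<in>UNIV. A$i$j * x$j) = A$i$i * x$i" for i
    using assms by (subst sum.remove[of UNIV i]) auto
  then show ?thesis
    by (simp add: vec_eq_iff matrix_vector_mult_def)
qed

text \<open>Unlike \<open>measure_linear_image\<close> in \<open>Change_Of_Vars\<close>, this needs no well-order on \<open>'n\<close>.\<close>

lemma nn_integral_lborel_linear:
  fixes A :: "real^'n^'n" and h :: "real^'n \<Rightarrow> ennreal"
  assumes "det A \<noteq> 0" and "h \<in> borel_measurable borel"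
  shows "(\<integral>\<^sup>+x. h x \<partial>lborel) = ennreal \<bar>det A\<bar> * (\<integral>\<^sup>+x. h (A *v x) \<partial>lborel)"
proof -
  define P where "P A \<longleftrightarrow> (det A \<noteq> 0 \<longrightarrow> (\<forall>h\<in>borel_measurable borel.
      (\<integral>\<^sup>+x. h x \<partial>lborel) = ennreal \<bar>det A\<bar> * (\<integral>\<^sup>+x. h (A *v x) \<partial>lborel)))" for A :: "real^'n^'n"
  have "P A"
  proof (rule induct_matrix_elementary)
    fix A B :: "real^'n^'n"
    assume "P A" "P B"
    then show "P (A ** B)"
      unfolding P_def
    proof (intro impI ballI)
      fix h :: "real^'n \<Rightarrow> ennreal"
      assume "det (A ** B) \<noteq> 0" and [measurable]: "h \<in> borel_measurable borel"
      then have "det A \<noteq> 0" "det B \<noteq> 0"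
        by (auto simp: det_mul)
      have "(\<lambda>x. h (A *v x)) \<in> borel_measurable borel"
        by measurable
      then have "(\<integral>\<^sup>+x. h x \<partial>lborel) = ennreal \<bar>det A\<bar> * (\<integral>\<^sup>+x. h (A *v x) \<partial>lborel)"
        and "(\<integral>\<^sup>+x. h (A *v x) \<partial>lborel) = ennreal \<bar>det B\<bar> * (\<integral>\<^sup>+x. h (A *v (B *v x)) \<partial>lborel)"
        using \<open>P A\<close> \<open>P B\<close> \<open>det A \<noteq> 0\<close> \<open>det B \<noteq> 0\<close> \<open>h \<in> borel_measurable borel\<close>
        unfolding P_def by blast+
      then show "(\<integral>\<^sup>+x. h x \<partial>lborel) = ennreal \<bar>det (A ** B)\<bar> * (\<integral>\<^sup>+x. h ((A ** B) *v x) \<partial>lborel)"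
        by (simp add: det_mul abs_mult ennreal_mult mult.assoc matrix_vector_mul_assoc)
    qed
  next
    fix A :: "real^'n^'n" and i
    assume "row i A = 0"
    then show "P A"
      by (simp add: P_def det_zero_row)
  next
    fix A :: "real^'n^'n"
    assume diagonal: "\<And>i j. i \<noteq> j \<Longrightarrow> A$i$j = 0"
    show "P A"
      unfolding P_def
    proof (intro impI ballI)
      fix h :: "real^'n \<Rightarrow> ennreal"
      assume "det A \<noteq> 0" and "h \<in> borel_measurable borel"
      moreover have "det A = (\<Prod>i\<in>UNIV. A$i$i)"
        using diagonal by (simp add: det_diagonal)
      ultimately show "(\<integral>\<^sup>+x. h x \<partial>lborel) = ennreal \<bar>det A\<bar> * (\<integral>\<^sup>+x. h (A *v x) \<partial>lborel)"
        using nn_integral_lborel_stretch[of "\<lambda>i. A$i$i" h]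
        by (simp add: matrix_vector_mult_diagonal[OF diagonal])
    qed
  next
    fix m n :: 'n
    assume "m \<noteq> n"
    then show "P (\<chi> i j. mat 1 $ i $ Transposition.transpose m n j)"
      by (simp add: P_def det_swap_matrix matrix_vector_mult_swap_matrix nn_integral_lborel_swap)
  next
    fix m n :: 'n and c :: real
    assume "m \<noteq> n"
    then show "P (\<chi> i j. if i = m \<and> j = n then c else of_bool (i = j))"
      by (simp add: P_def det_shear_matrix matrix_vector_mult_shear_matrix nn_integral_lborel_shear)
  qed
  then show ?thesis
    using assms unfolding P_def by blast
qed

section \<open>The multivariate normal distribution\<close>

lemma nn_integral_exp_neg_square_half:
  "(\<integral>\<^sup>+t. exp (- t\<^sup>2 / 2) \<partial>lborel) = ennreal (sqrt (2 * pi))"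
proof -
  have "(\<integral>\<^sup>+t. exp (- t\<^sup>2 / 2) \<partial>lborel) = (\<integral>\<^sup>+t. sqrt (2 * pi) * std_normal_density t \<partial>lborel)"
    by (simp add: std_normal_density_def)
  also have "\<dots> = sqrt (2 * pi) * (\<integral>\<^sup>+t. std_normal_density t \<partial>lborel)"
    by (simp add: ennreal_mult nn_integral_cmult)
  also have "(\<integral>\<^sup>+t. std_normal_density t \<partial>lborel) = 1"
    by (simp add: nn_integral_eq_integral)
  finally show ?thesis
    by simp
qed

lemma nn_integral_exp_neg_inner_half:
  "(\<integral>\<^sup>+x. exp (- (x \<bullet> x) / 2) \<partial>(lborel :: (real^'n) measure)) = ennreal (sqrt (2 * pi) ^ CARD('n))"
proof -
  have "exp (- (x \<bullet> x) / 2) = (\<Prod>b\<in>Basis. exp (- (x \<bullet> b)\<^sup>2 / 2))" for x :: "real^'n"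
    by (simp add: euclidean_inner[of x x] power2_eq_square exp_sum[symmetric] sum_divide_distrib sum_negf)
  then have "(\<integral>\<^sup>+x. exp (- (x \<bullet> x) / 2) \<partial>(lborel :: (real^'n) measure))
      = (\<integral>\<^sup>+x. (\<Prod>b\<in>(Basis :: (real^'n) set). ennreal (exp (- (x \<bullet> b)\<^sup>2 / 2))) \<partial>lborel)"
    by (simp add: prod_ennreal)
  also have "\<dots> = (\<Prod>b\<in>(Basis :: (real^'n) set). \<integral>\<^sup>+t. exp (- t\<^sup>2 / 2) \<partial>lborel)"
    by (rule nn_integral_lborel_prod) auto
  finally show ?thesis
    by (simp only: nn_integral_exp_neg_square_half prod_constant) (simp add: ennreal_power)
qed

lemma nn_integral_exp_quadratic_form:
  fixes A :: "real^'n^'n"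
  assumes "sym_pos_def_mat A"
  shows "(\<integral>\<^sup>+x. exp (- (x \<bullet> (A *v x)) / 2) \<partial>lborel) = ennreal (sqrt (2 * pi) ^ CARD('n) / sqrt (det A))"
proof -
  obtain L :: "real^'n^'n" where L: "transpose L ** A ** L = mat 1"
    using sym_pos_def_mat_congruent_mat_1[OF assms] .
  have "(det L)\<^sup>2 = 1 / det A"
    using det_congruent_mat_1[OF L] sym_pos_def_mat_det_pos[OF assms] by (simp add: field_simps)
  then have det_L: "\<bar>det L\<bar> = 1 / sqrt (det A)"
    by (metis real_sqrt_abs real_sqrt_divide real_sqrt_one)
  then have "det L \<noteq> 0"
    using sym_pos_def_mat_det_pos[OF assms] by auto
  have "(\<integral>\<^sup>+x. exp (- (x \<bullet> (A *v x)) / 2) \<partial>lborel)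
      = \<bar>det L\<bar> * (\<integral>\<^sup>+y. exp (- ((L *v y) \<bullet> (A *v (L *v y))) / 2) \<partial>lborel)"
    using \<open>det L \<noteq> 0\<close> by (rule nn_integral_lborel_linear) simp
  also have "\<dots> = \<bar>det L\<bar> * (\<integral>\<^sup>+y. exp (- (y \<bullet> y) / 2) \<partial>(lborel :: (real^'n) measure))"
    by (simp add: inner_matrix_vector_congruence L)
  finally show ?thesis
    using sym_pos_def_mat_det_pos[OF assms]
    by (simp only: nn_integral_exp_neg_inner_half det_L) (simp add: ennreal_mult[symmetric])
qed

lemma mvn_density_pos:
  assumes "sym_pos_def_mat S"
  shows "mvn_density m S x > 0"
  using sym_pos_def_mat_det_pos[OF assms] by (simp add: mvn_density_def)

lemma borel_measurable_mvn_density [measurable]: "mvn_density m S \<in> borel_measurable borel"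
  unfolding mvn_density_def by measurable

lemma nn_integral_mvn_density:
  fixes S :: "real^'n^'n"
  assumes S: "sym_pos_def_mat S"
  shows "(\<integral>\<^sup>+x. mvn_density m S x \<partial>lborel) = 1"
proof -
  define N where "N = sqrt ((2 * pi) ^ CARD('n) * det S)"
  have "N > 0"
    using sym_pos_def_mat_det_pos[OF S] by (simp add: N_def)
  have "ennreal (mvn_density m S x) = ennreal (1 / N) * exp (- ((x - m) \<bullet> (matrix_inv S *v (x - m))) / 2)" for x
    using \<open>N > 0\<close> by (simp add: mvn_density_def N_def flip: ennreal_mult)
  then have "(\<integral>\<^sup>+x. mvn_density m S x \<partial>lborel)
      = ennreal (1 / N) * (\<integral>\<^sup>+x. exp (- ((x - m) \<bullet> (matrix_inv S *v (x - m))) / 2) \<partial>lborel)"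
    by (simp add: nn_integral_cmult)
  also have "(\<integral>\<^sup>+x. exp (- ((x - m) \<bullet> (matrix_inv S *v (x - m))) / 2) \<partial>lborel)
      = (\<integral>\<^sup>+x. exp (- (x \<bullet> (matrix_inv S *v x)) / 2) \<partial>lborel)"
    using nn_integral_lborel_affine[of 1 "\<lambda>x. exp (- ((x - m) \<bullet> (matrix_inv S *v (x - m))) / 2)" m] by simp
  also have "\<dots> = ennreal (sqrt (2 * pi) ^ CARD('n) / sqrt (det (matrix_inv S)))"
    using S by (intro nn_integral_exp_quadratic_form sym_pos_def_mat_matrix_inv)
  also have "sqrt (2 * pi) ^ CARD('n) / sqrt (det (matrix_inv S)) = N"
    using sym_pos_def_mat_det_pos[OF S]
    by (simp add: det_matrix_inv sym_pos_def_mat_invertible[OF S] N_def real_sqrt_mult real_sqrt_power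
      real_sqrt_inverse power_mult_distrib divide_inverse)
  finally show ?thesis
    using \<open>N > 0\<close> by (simp add: ennreal_mult[symmetric])
qed

lemma sets_mvnormal [simp, measurable_cong]: "sets (mvnormal m S) = sets borel"
  by (simp add: mvnormal_def)

lemma prob_space_mvnormal:
  assumes "sym_pos_def_mat S"
  shows "prob_space (mvnormal m S)"
  by (rule prob_spaceI)
    (simp add: mvnormal_def emeasure_density nn_integral_mvn_density[OF assms])

lemma mvn_density_scaleR:
  fixes S :: "real^'n^'n"
  assumes "sym_pos_def_mat S" and "s > 0"
  shows "mvn_density m (s *\<^sub>R S) x = exp (- ((x - m) \<bullet> (matrix_inv S *v (x - m))) / (2 * s))
      / (sqrt s ^ CARD('n) * sqrt ((2 * pi) ^ CARD('n) * det S))"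
proof -
  have "(x - m) \<bullet> (matrix_inv (s *\<^sub>R S) *v (x - m)) = (x - m) \<bullet> (matrix_inv S *v (x - m)) / s"
    using assms by (simp add: matrix_inv_scaleR sym_pos_def_mat_invertible scaleR_matrix_vector_assoc[symmetric]
      divide_inverse mult.commute)
  moreover have "sqrt ((2 * pi) ^ CARD('n) * det (s *\<^sub>R S)) = sqrt s ^ CARD('n) * sqrt ((2 * pi) ^ CARD('n) * det S)"
    by (simp add: det_scaleR real_sqrt_mult real_sqrt_power)
  ultimately show ?thesis
    by (simp add: mvn_density_def)
qed

lemma mvn_density_affine:
  fixes S :: "real^'n^'n"
  assumes "sym_pos_def_mat S" and "c \<noteq> 0"
  shows "\<bar>c\<bar> ^ CARD('n) * mvn_density (a + c *\<^sub>R m) (c\<^sup>2 *\<^sub>R S) (a + c *\<^sub>R x) = mvn_density m S x"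
proof -
  have "a + c *\<^sub>R x - (a + c *\<^sub>R m) = c *\<^sub>R (x - m)"
    by (simp add: algebra_simps)
  moreover have "c\<^sup>2 > 0"
    using assms(2) by simp
  ultimately have "mvn_density (a + c *\<^sub>R m) (c\<^sup>2 *\<^sub>R S) (a + c *\<^sub>R x)
      = exp (- ((x - m) \<bullet> (matrix_inv S *v (x - m))) / 2) / (\<bar>c\<bar> ^ CARD('n) * sqrt ((2 * pi) ^ CARD('n) * det S))"
    using assms(2) by (simp add: mvn_density_scaleR[OF assms(1)] matrix_vector_mult_scaleR power2_eq_square)
  then show ?thesis
    using assms(2) by (simp add: mvn_density_def)
qed

lemma nn_integral_mvnormal:
  fixes f :: "real^'n \<Rightarrow> ennreal"
  shows "f \<in> borel_measurable borel \<Longrightarrow> (\<integral>\<^sup>+x. f x \<partial>mvnormal m S) = (\<integral>\<^sup>+x. mvn_density m S x * f x \<partial>lborel)"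
  by (simp add: mvnormal_def nn_integral_density)

lemma nn_integral_mvnormal_affine:
  fixes S :: "real^'n^'n"
    and f :: "real^'n \<Rightarrow> ennreal"
  assumes "sym_pos_def_mat S" and "c \<noteq> 0" and [measurable]: "f \<in> borel_measurable borel"
  shows "(\<integral>\<^sup>+x. f (a + c *\<^sub>R x) \<partial>mvnormal m S) = (\<integral>\<^sup>+x. f x \<partial>mvnormal (a + c *\<^sub>R m) (c\<^sup>2 *\<^sub>R S))"
proof -
  have "(\<integral>\<^sup>+x. f x \<partial>mvnormal (a + c *\<^sub>R m) (c\<^sup>2 *\<^sub>R S))
      = \<bar>c\<bar> ^ CARD('n)
        * (\<integral>\<^sup>+x. mvn_density (a + c *\<^sub>R m) (c\<^sup>2 *\<^sub>R S) (a + c *\<^sub>R x) * f (a + c *\<^sub>R x) \<partial>lborel)"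
    using nn_integral_lborel_affine[OF assms(2), of "\<lambda>z. mvn_density (a + c *\<^sub>R m) (c\<^sup>2 *\<^sub>R S) z * f z" a]
    by (simp add: nn_integral_mvnormal)
  also have "\<dots> = (\<integral>\<^sup>+x. (\<bar>c\<bar> ^ CARD('n) * mvn_density (a + c *\<^sub>R m) (c\<^sup>2 *\<^sub>R S) (a + c *\<^sub>R x))
      * f (a + c *\<^sub>R x) \<partial>lborel)"
    by (simp add: nn_integral_cmult[symmetric] ennreal_mult' mult.assoc)
  also have "\<dots> = (\<integral>\<^sup>+x. f (a + c *\<^sub>R x) \<partial>mvnormal m S)"
    by (simp add: mvn_density_affine[OF assms(1,2)] nn_integral_mvnormal)
  finally show ?thesis ..
qed

lemma mvn_density_convolution_pointwise:
  fixes S :: "real^'n^'n"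
  assumes S: "sym_pos_def_mat S" and "s1 > 0" and "s2 > 0"
  shows "mvn_density m1 (s1 *\<^sub>R S) y * mvn_density m2 (s2 *\<^sub>R S) (z - y)
    = mvn_density (m1 + m2) ((s1 + s2) *\<^sub>R S) z
      * mvn_density (m1 + (s1 / (s1 + s2)) *\<^sub>R (z - m1 - m2)) ((s1 * s2 / (s1 + s2)) *\<^sub>R S) y"
proof -
  define Q where "Q v = v \<bullet> (matrix_inv S *v v)" for v
  define N where "N = sqrt ((2 * pi) ^ CARD('n) * det S)"
  define s where "s = s1 + s2"
  define r where "r = s1 * s2 / s"
  define t where "t = s1 / s"
  define u where "u = y - m1"
  define w where "w = z - m1 - m2"
  have "s > 0" "r > 0"
    using assms by (simp_all add: s_def r_def)
  have dens: "mvn_density c (\<sigma> *\<^sub>R S) v = exp (- (Q (v - c) / \<sigma>) / 2) / (sqrt \<sigma> ^ CARD('n) * N)"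
    if "\<sigma> > 0" for c \<sigma> v
    using mvn_density_scaleR[OF S that] by (simp add: Q_def N_def)
  have exp_mult: "exp (- a / 2) / X * (exp (- b / 2) / Y) = exp (- (a + b) / 2) / (X * Y)" for a b X Y :: real
    by (simp add: exp_add[symmetric] add_divide_distrib)
  have Q_uminus: "Q (- v) = Q v" for v
    by (simp only: Q_def quadratic_form_uminus)
  have "transpose (matrix_inv S) = matrix_inv S"
    using sym_pos_def_mat_matrix_inv[OF S] by (simp add: sym_pos_def_mat_def)
  from quadratic_form_convolution[OF this assms(2,3)]
  have expo: "Q u / s1 + Q (u - w) / s2 = Q w / s + Q (u - t *\<^sub>R w) / r"
    by (simp add: Q_def s_def r_def t_def)
  have norm: "sqrt s1 ^ CARD('n) * N * (sqrt s2 ^ CARD('n) * N) = sqrt s ^ CARD('n) * N * (sqrt r ^ CARD('n) * N)"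
    using \<open>s > 0\<close> by (simp add: r_def real_sqrt_mult[symmetric] power_mult_distrib[symmetric] mult_ac)
  have eqs: "y - m1 = u" "z - y - m2 = - (u - w)" "z - (m1 + m2) = w"
    "y - (m1 + t *\<^sub>R (z - m1 - m2)) = u - t *\<^sub>R w"
    by (simp_all add: u_def w_def algebra_simps)
  have "mvn_density m1 (s1 *\<^sub>R S) y * mvn_density m2 (s2 *\<^sub>R S) (z - y)
      = exp (- (Q u / s1) / 2) / (sqrt s1 ^ CARD('n) * N) * (exp (- (Q (u - w) / s2) / 2) / (sqrt s2 ^ CARD('n) * N))"
    using assms by (simp only: dens eqs Q_uminus)
  also have "\<dots> = exp (- (Q w / s) / 2) / (sqrt s ^ CARD('n) * N) * (exp (- (Q (u - t *\<^sub>R w) / r) / 2) / (sqrt r ^ CARD('n) * N))"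
    by (simp only: exp_mult expo norm)
  also have "\<dots> = mvn_density (m1 + m2) (s *\<^sub>R S) z * mvn_density (m1 + t *\<^sub>R (z - m1 - m2)) (r *\<^sub>R S) y"
    using \<open>s > 0\<close> \<open>r > 0\<close> by (simp only: dens eqs)
  finally show ?thesis
    by (simp only: s_def r_def t_def)
qed

lemma mvn_density_convolution:
  fixes S :: "real^'n^'n"
  assumes S: "sym_pos_def_mat S" and "s1 > 0" and "s2 > 0"
  shows "(\<integral>\<^sup>+y. mvn_density m1 (s1 *\<^sub>R S) y * mvn_density m2 (s2 *\<^sub>R S) (z - y) \<partial>lborel)
    = mvn_density (m1 + m2) ((s1 + s2) *\<^sub>R S) z"
proof -
  let ?m = "m1 + (s1 / (s1 + s2)) *\<^sub>R (z - m1 - m2)" and ?r = "s1 * s2 / (s1 + s2)"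
  have pos: "sym_pos_def_mat ((s1 + s2) *\<^sub>R S)" "sym_pos_def_mat (?r *\<^sub>R S)"
    using assms by (simp_all add: sym_pos_def_mat_scaleR)
  have "(\<integral>\<^sup>+y. mvn_density m1 (s1 *\<^sub>R S) y * mvn_density m2 (s2 *\<^sub>R S) (z - y) \<partial>lborel)
      = (\<integral>\<^sup>+y. mvn_density (m1 + m2) ((s1 + s2) *\<^sub>R S) z * ennreal (mvn_density ?m (?r *\<^sub>R S) y) \<partial>lborel)"
    using pos by (simp add: mvn_density_convolution_pointwise[OF assms] ennreal_mult less_imp_le mvn_density_pos)
  also have "\<dots> = mvn_density (m1 + m2) ((s1 + s2) *\<^sub>R S) z"
    by (simp add: nn_integral_cmult nn_integral_mvn_density[OF pos(2)])
  finally show ?thesis .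
qed

lemma nn_integral_mvnormal_convolution:
  fixes S :: "real^'n^'n" and f :: "real^'n \<Rightarrow> ennreal"
  assumes S: "sym_pos_def_mat S" and "s1 > 0" and "s2 > 0" and [measurable]: "f \<in> borel_measurable borel"
  shows "(\<integral>\<^sup>+y. (\<integral>\<^sup>+x. f (y + x) \<partial>mvnormal m2 (s2 *\<^sub>R S)) \<partial>mvnormal m1 (s1 *\<^sub>R S))
    = (\<integral>\<^sup>+z. f z \<partial>mvnormal (m1 + m2) ((s1 + s2) *\<^sub>R S))"
proof -
  let ?d1 = "mvn_density m1 (s1 *\<^sub>R S)" and ?d2 = "mvn_density m2 (s2 *\<^sub>R S)"
  have d_nonneg: "?d1 v \<ge> 0" "?d2 v \<ge> 0" for v
    using assms by (simp_all add: less_imp_le mvn_density_pos sym_pos_def_mat_scaleR)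
  have "(\<integral>\<^sup>+z. f z \<partial>mvnormal (m1 + m2) ((s1 + s2) *\<^sub>R S))
      = (\<integral>\<^sup>+z. (\<integral>\<^sup>+y. ?d1 y * ?d2 (z - y) \<partial>lborel) * f z \<partial>lborel)"
    by (simp add: nn_integral_mvnormal mvn_density_convolution[OF assms(1-3)])
  also have "\<dots> = (\<integral>\<^sup>+z. \<integral>\<^sup>+y. ?d1 y * ?d2 (z - y) * f z \<partial>lborel \<partial>lborel)"
    by (simp add: nn_integral_multc)
  also have "\<dots> = (\<integral>\<^sup>+y. \<integral>\<^sup>+z. ?d1 y * ?d2 (z - y) * f z \<partial>lborel \<partial>lborel)"
    by (rule lborel_pair.Fubini') measurable
  also have "\<dots> = (\<integral>\<^sup>+y. ?d1 y * (\<integral>\<^sup>+x. ?d2 x * f (y + x) \<partial>lborel) \<partial>lborel)"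
  proof (rule nn_integral_cong)
    fix y :: "real^'n"
    have "(\<integral>\<^sup>+z. ?d1 y * ?d2 (z - y) * f z \<partial>lborel) = ?d1 y * (\<integral>\<^sup>+z. ?d2 (z - y) * f z \<partial>lborel)"
      using d_nonneg by (simp add: nn_integral_cmult[symmetric] ennreal_mult mult.assoc)
    also have "(\<integral>\<^sup>+z. ?d2 (z - y) * f z \<partial>lborel) = (\<integral>\<^sup>+x. ?d2 x * f (y + x) \<partial>lborel)"
      using nn_integral_lborel_affine[of 1 "\<lambda>z. ?d2 (z - y) * f z" y] by simp
    finally show "(\<integral>\<^sup>+z. ?d1 y * ?d2 (z - y) * f z \<partial>lborel) = ?d1 y * (\<integral>\<^sup>+x. ?d2 x * f (y + x) \<partial>lborel)" .
  qed
  also have "\<dots> = (\<integral>\<^sup>+y. (\<integral>\<^sup>+x. f (y + x) \<partial>mvnormal m2 (s2 *\<^sub>R S)) \<partial>mvnormal m1 (s1 *\<^sub>R S))"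
    by (simp add: nn_integral_mvnormal)
  finally show ?thesis ..
qed

section \<open>Renyi divergence\<close>

lemma absolutely_continuous_density_pos:
  fixes f g :: "'a \<Rightarrow> ennreal"
  assumes [measurable]: "f \<in> borel_measurable M" "g \<in> borel_measurable M" and pos: "\<And>x. f x > 0"
  shows "absolutely_continuous (density M f) (density M g)"
  unfolding absolutely_continuous_def
proof
  fix A
  assume "A \<in> null_sets (density M f)"
  moreover have "f x \<noteq> 0" for x
    using pos[of x] by auto
  ultimately have "A \<in> sets M" and "AE x in M. x \<notin> A"
    by (auto simp: null_sets_density_iff elim!: eventually_mono)
  then have "A \<in> null_sets M"
    by (simp add: AE_iff_null_sets)
  then show "A \<in> null_sets (density M g)"
    using absolutely_continuousI_density[of g M] by (auto simp: absolutely_continuous_def)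
qed

lemma AE_enn2real_RN_deriv_density:
  fixes f :: "'a::euclidean_space \<Rightarrow> real"
  assumes [measurable]: "f \<in> borel_measurable borel" and "\<And>x. f x \<ge> 0"
  shows "AE x in lborel. enn2real (RN_deriv lborel (density lborel f) x) = f x"
proof -
  have "AE x in lborel. ennreal (f x) = RN_deriv lborel (density lborel f) x"
    by (rule sigma_finite_measure.RN_deriv_unique[OF sigma_finite_lborel]) simp_all
  then show ?thesis
    by eventually_elim (metis assms(2) enn2real_ennreal)
qed

lemma renyi_divergence_density:
  fixes p q :: "'a::euclidean_space \<Rightarrow> real" and \<alpha> :: real
  assumes [measurable]: "p \<in> borel_measurable borel" "q \<in> borel_measurable borel"
    and "\<And>x. p x \<ge> 0" and "\<And>x. q x > 0"
  defines "I \<equiv> \<integral>\<^sup>+x. ennreal (p x powr \<alpha> * q x powr (1 - \<alpha>)) \<partial>lborel"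
  shows "renyi_divergence \<alpha> (density lborel p) (density lborel q)
    = (if I = \<infinity> then \<infinity> else ereal (ln (enn2real I) / (\<alpha> - 1)))"
proof -
  have "absolutely_continuous (density lborel q) (density lborel p)"
    using assms(4) by (intro absolutely_continuous_density_pos) simp_all
  moreover have "(\<integral>\<^sup>+x. ennreal (enn2real (RN_deriv lborel (density lborel p) x) powr \<alpha>
      * enn2real (RN_deriv lborel (density lborel q) x) powr (1 - \<alpha>)) \<partial>lborel) = I"
    unfolding I_def using AE_enn2real_RN_deriv_density[of p] AE_enn2real_RN_deriv_density[of q] assms(3,4)
    by (intro nn_integral_cong_AE) (auto simp: less_imp_le)
  ultimately show ?thesis
    by (simp add: renyi_divergence_def Let_def)
qed

lemma mvn_density_powr_mult:
  fixes S :: "real^'n^'n"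
  assumes S: "sym_pos_def_mat S"
  shows "mvn_density a S x powr \<alpha> * mvn_density b S x powr (1 - \<alpha>)
    = exp (\<alpha> * (\<alpha> - 1) * ((a - b) \<bullet> (matrix_inv S *v (a - b))) / 2) * mvn_density (\<alpha> *\<^sub>R a + (1 - \<alpha>) *\<^sub>R b) S x"
proof -
  define Q where "Q v = v \<bullet> (matrix_inv S *v v)" for v
  define N where "N = sqrt ((2 * pi) ^ CARD('n) * det S)"
  have "N > 0"
    using sym_pos_def_mat_det_pos[OF S] by (simp add: N_def)
  have dens: "mvn_density c S v = exp (- Q (v - c) / 2) / N" for c v
    by (simp add: mvn_density_def Q_def N_def)
  have symmetric: "transpose (matrix_inv S) = matrix_inv S"
    using sym_pos_def_mat_matrix_inv[OF S] by (simp add: sym_pos_def_mat_def)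
  have "\<alpha> * Q (x - a) + (1 - \<alpha>) * Q (x - b)
      = Q (x - (\<alpha> *\<^sub>R a + (1 - \<alpha>) *\<^sub>R b)) + \<alpha> * (1 - \<alpha>) * Q (a - b)"
  proof -
    have "\<alpha> *\<^sub>R (x - a) + (1 - \<alpha>) *\<^sub>R (x - b) = x - (\<alpha> *\<^sub>R a + (1 - \<alpha>) *\<^sub>R b)"
      by (simp add: algebra_simps)
    moreover have "Q ((x - a) - (x - b)) = Q (a - b)"
      using quadratic_form_uminus[of "a - b"] by (simp add: Q_def)
    ultimately show ?thesis
      using quadratic_form_affine_combination[OF symmetric, of \<alpha> "x - a" "x - b"]
      unfolding Q_def[symmetric] by simp
  qed
  then have "- Q (x - a) / 2 * \<alpha> + - Q (x - b) / 2 * (1 - \<alpha>)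
      = - Q (x - (\<alpha> *\<^sub>R a + (1 - \<alpha>) *\<^sub>R b)) / 2 + \<alpha> * (\<alpha> - 1) * Q (a - b) / 2"
    by (simp add: field_simps)
  moreover have "N powr \<alpha> * N powr (1 - \<alpha>) = N"
    using \<open>N > 0\<close> by (simp add: powr_add[symmetric])
  ultimately show ?thesis
    using \<open>N > 0\<close>
    by (simp add: dens powr_divide exp_powr_real exp_add[symmetric] times_divide_times_eq Q_def mult.commute)
qed

lemma renyi_divergence_mvnormal:
  fixes S :: "real^'n^'n"
  assumes S: "sym_pos_def_mat S" and "\<alpha> \<noteq> 1"
  shows "renyi_divergence \<alpha> (mvnormal a S) (mvnormal b S) = ereal (\<alpha> * ((a - b) \<bullet> (matrix_inv S *v (a - b))) / 2)"
proof -
  let ?K = "exp (\<alpha> * (\<alpha> - 1) * ((a - b) \<bullet> (matrix_inv S *v (a - b))) / 2)"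
  have "(\<integral>\<^sup>+x. ennreal (mvn_density a S x powr \<alpha> * mvn_density b S x powr (1 - \<alpha>)) \<partial>lborel)
      = (\<integral>\<^sup>+x. ?K * ennreal (mvn_density (\<alpha> *\<^sub>R a + (1 - \<alpha>) *\<^sub>R b) S x) \<partial>lborel)"
    using S by (simp add: mvn_density_powr_mult ennreal_mult less_imp_le[OF mvn_density_pos[OF S]])
  also have "\<dots> = ?K"
    using S by (simp add: nn_integral_cmult nn_integral_mvn_density)
  finally show ?thesis
    using S assms(2) by (simp add: mvnormal_def renyi_divergence_density mvn_density_pos less_imp_le field_simps)
qed

section \<open>Stochastic gradient descent on the squared loss\<close>

primrec sgd_mean :: "real \<Rightarrow> real^'n \<Rightarrow> real^'n \<Rightarrow> nat \<Rightarrow> real^'n" where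
  "sgd_mean eta mu theta 0 = theta"
| "sgd_mean eta mu theta (Suc k) = (1 - 2 * eta) *\<^sub>R sgd_mean eta mu theta k + (2 * eta) *\<^sub>R mu"

primrec sgd_var :: "real \<Rightarrow> nat \<Rightarrow> real" where
  "sgd_var eta 0 = 0"
| "sgd_var eta (Suc k) = (1 - 2 * eta)\<^sup>2 * sgd_var eta k + (2 * eta)\<^sup>2"

lemma sgd_var_pos:
  assumes "eta \<noteq> 0" and "k \<ge> 1"
  shows "sgd_var eta k > 0"
  using assms(2)
proof (induction k rule: dec_induct)
  case base
  then show ?case
    using assms(1) by simp
next
  case (step k)
  then show ?case
    using assms(1) by (simp add: add_nonneg_pos)
qed

lemma sgd_var_lower_bound:
  assumes "0 \<le> eta" and "eta \<le> 1"
  shows "real k * (2 * eta)\<^sup>2 * ((1 - 2 * eta) ^ k)\<^sup>2 \<le> sgd_var eta k"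
proof (induction k)
  case 0
  then show ?case
    by simp
next
  case (Suc k)
  have "(1 - 2 * eta)\<^sup>2 \<le> 1"
    using assms by (simp add: abs_square_le_1)
  then have "((1 - 2 * eta)\<^sup>2) ^ Suc k \<le> 1"
    by (meson power_le_one zero_le_power2)
  then have "((1 - 2 * eta) ^ Suc k)\<^sup>2 \<le> 1"
    by (metis power_mult mult.commute)
  have "real (Suc k) * (2 * eta)\<^sup>2 * ((1 - 2 * eta) ^ Suc k)\<^sup>2
      = (1 - 2 * eta)\<^sup>2 * (real k * (2 * eta)\<^sup>2 * ((1 - 2 * eta) ^ k)\<^sup>2) + (2 * eta)\<^sup>2 * ((1 - 2 * eta) ^ Suc k)\<^sup>2"
    by (simp add: algebra_simps power2_eq_square)
  also have "\<dots> \<le> (1 - 2 * eta)\<^sup>2 * sgd_var eta k + (2 * eta)\<^sup>2 * 1"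
    using Suc.IH \<open>((1 - 2 * eta) ^ Suc k)\<^sup>2 \<le> 1\<close> by (intro add_mono mult_left_mono) auto
  also have "\<dots> = sgd_var eta (Suc k)"
    by simp
  finally show ?case .
qed

lemma sgd_mean_diff:
  "sgd_mean eta mu theta1 k - sgd_mean eta mu theta2 k = (1 - 2 * eta) ^ k *\<^sub>R (theta1 - theta2)"
proof (induction k)
  case (Suc k)
  have "sgd_mean eta mu theta1 (Suc k) - sgd_mean eta mu theta2 (Suc k)
      = (1 - 2 * eta) *\<^sub>R (sgd_mean eta mu theta1 k - sgd_mean eta mu theta2 k)"
    by (simp add: scaleR_diff_right)
  then show ?case
    by (simp add: Suc.IH)
qed simp

lemma sgd_iter_Suc_affine:
  "sgd_iter eta theta xs (Suc k) = (1 - 2 * eta) *\<^sub>R sgd_iter eta theta xs k + (2 * eta) *\<^sub>R xs (Suc k)"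
  by (simp add: algebra_simps)

lemma sgd_iter_fun_upd:
  "k < j \<Longrightarrow> sgd_iter eta theta (xs(j := y)) k = sgd_iter eta theta xs k"
  by (induction k) auto

lemma measurable_sgd_iter [measurable]:
  assumes "{1..k} \<subseteq> I" and "sets D = sets borel"
  shows "(\<lambda>xs. sgd_iter eta theta xs k) \<in> borel_measurable (\<Pi>\<^sub>M i\<in>I. D)"
  using assms(1)
proof (induction k)
  case 0
  then show ?case
    by simp
next
  case (Suc k)
  then have "Suc k \<in> I" and "{1..k} \<subseteq> I"
    by auto
  then have "(\<lambda>xs. xs (Suc k)) \<in> borel_measurable (\<Pi>\<^sub>M i\<in>I. D)"
    using measurable_component_singleton[of "Suc k" I "\<lambda>_. D"] by (simp add: measurable_cong_sets[OF refl assms(2)])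
  then show ?case
    using Suc.IH[OF \<open>{1..k} \<subseteq> I\<close>] by (simp add: sgd_iter_Suc_affine del: sgd_iter.simps)
qed

lemma nn_integral_sgd_iter:
  fixes S :: "real^'n^'n" and f :: "real^'n \<Rightarrow> ennreal"
  assumes S: "sym_pos_def_mat S" and "eta \<noteq> 0" and "2 * eta \<noteq> 1" and "k \<ge> 1"
    and "f \<in> borel_measurable borel"
  shows "(\<integral>\<^sup>+xs. f (sgd_iter eta theta xs k) \<partial>(\<Pi>\<^sub>M i\<in>{1..k}. mvnormal mu S))
    = (\<integral>\<^sup>+z. f z \<partial>mvnormal (sgd_mean eta mu theta k) (sgd_var eta k *\<^sub>R S))"
proof -
  interpret product_prob_space "\<lambda>_::nat. mvnormal mu S"
    by (simp add: product_prob_space_def product_sigma_finite_def product_prob_space_axioms_def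
      prob_space_mvnormal[OF S] prob_space_imp_sigma_finite)
  show ?thesis
    using assms(4,5)
  proof (induction k arbitrary: f rule: dec_induct)
    case base
    note [measurable] = base
    have "(\<integral>\<^sup>+xs. f (sgd_iter eta theta xs 1) \<partial>(\<Pi>\<^sub>M i\<in>{1..1}. mvnormal mu S))
        = (\<integral>\<^sup>+y. f ((1 - 2 * eta) *\<^sub>R theta + (2 * eta) *\<^sub>R y) \<partial>mvnormal mu S)"
      using product_nn_integral_singleton[of "\<lambda>y. f ((1 - 2 * eta) *\<^sub>R theta + (2 * eta) *\<^sub>R y)" 1]
      by (simp add: sgd_iter_Suc_affine del: sgd_iter.simps(2))
    also have "\<dots> = (\<integral>\<^sup>+z. f z \<partial>mvnormal (sgd_mean eta mu theta 1) (sgd_var eta 1 *\<^sub>R S))"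
      using assms(2) by (simp add: nn_integral_mvnormal_affine[OF S])
    finally show ?case .
  next
    case (step k)
    note [measurable] = step.prems
    define G where "G v = (\<integral>\<^sup>+x. f (v + x) \<partial>mvnormal ((2 * eta) *\<^sub>R mu) ((2 * eta)\<^sup>2 *\<^sub>R S))" for v
    have [measurable]: "G \<in> borel_measurable borel"
      unfolding G_def by (subst nn_integral_mvnormal) measurable
    have "sgd_var eta k > 0"
      using sgd_var_pos[OF assms(2) step.hyps(1)] .
    have "(\<lambda>xs. sgd_iter eta theta xs (Suc k)) \<in> borel_measurable (\<Pi>\<^sub>M i\<in>insert (Suc k) {1..k}. mvnormal mu S)"
      by (rule measurable_sgd_iter) auto
    then have "(\<integral>\<^sup>+xs. f (sgd_iter eta theta xs (Suc k)) \<partial>(\<Pi>\<^sub>M i\<in>insert (Suc k) {1..k}. mvnormal mu S))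
        = (\<integral>\<^sup>+xs. \<integral>\<^sup>+y. f (sgd_iter eta theta (xs(Suc k := y)) (Suc k)) \<partial>mvnormal mu S \<partial>(\<Pi>\<^sub>M i\<in>{1..k}. mvnormal mu S))"
      by (intro product_nn_integral_insert) auto
    also have "\<dots> = (\<integral>\<^sup>+xs. G ((1 - 2 * eta) *\<^sub>R sgd_iter eta theta xs k) \<partial>(\<Pi>\<^sub>M i\<in>{1..k}. mvnormal mu S))"
    proof (rule nn_integral_cong)
      fix xs :: "nat \<Rightarrow> real^'n"
      let ?u = "(1 - 2 * eta) *\<^sub>R sgd_iter eta theta xs k"
      have "(\<integral>\<^sup>+y. f (sgd_iter eta theta (xs(Suc k := y)) (Suc k)) \<partial>mvnormal mu S)
          = (\<integral>\<^sup>+y. f (?u + (0 + (2 * eta) *\<^sub>R y)) \<partial>mvnormal mu S)"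
        by (simp add: sgd_iter_Suc_affine sgd_iter_fun_upd del: sgd_iter.simps)
      also have "\<dots> = G ?u"
        using nn_integral_mvnormal_affine[OF S, where c = "2 * eta" and f = "\<lambda>z. f (?u + z)" and a = 0 and m = mu]
          assms(2)
        by (simp add: G_def)
      finally show "(\<integral>\<^sup>+y. f (sgd_iter eta theta (xs(Suc k := y)) (Suc k)) \<partial>mvnormal mu S) = G ?u" .
    qed
    also have "\<dots> = (\<integral>\<^sup>+u. G ((1 - 2 * eta) *\<^sub>R u) \<partial>mvnormal (sgd_mean eta mu theta k) (sgd_var eta k *\<^sub>R S))"
      by (rule step.IH) measurable
    also have "\<dots> = (\<integral>\<^sup>+v. G v \<partial>mvnormal ((1 - 2 * eta) *\<^sub>R sgd_mean eta mu theta k)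
        ((1 - 2 * eta)\<^sup>2 *\<^sub>R sgd_var eta k *\<^sub>R S))"
      using nn_integral_mvnormal_affine[OF sym_pos_def_mat_scaleR[OF S \<open>sgd_var eta k > 0\<close>],
        where c = "1 - 2 * eta" and f = G and a = 0 and m = "sgd_mean eta mu theta k"] assms(3)
      by simp
    also have "\<dots> = (\<integral>\<^sup>+z. f z \<partial>mvnormal (sgd_mean eta mu theta (Suc k)) (sgd_var eta (Suc k) *\<^sub>R S))"
      using assms(2,3) \<open>sgd_var eta k > 0\<close>
      by (simp add: G_def nn_integral_mvnormal_convolution[OF S] scaleR_add_left)
    finally show ?case
      by (simp add: atLeastAtMostSuc_conv insert_commute)
  qed
qed

lemma sgd_dist_mvnormal:
  fixes S :: "real^'n^'n"
  assumes S: "sym_pos_def_mat S" and "eta \<noteq> 0" and "2 * eta \<noteq> 1" and "k \<ge> 1"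
  shows "sgd_dist eta theta (mvnormal mu S) k = mvnormal (sgd_mean eta mu theta k) (sgd_var eta k *\<^sub>R S)"
proof (rule measure_eqI)
  show "sets (sgd_dist eta theta (mvnormal mu S) k) = sets (mvnormal (sgd_mean eta mu theta k) (sgd_var eta k *\<^sub>R S))"
    by (simp add: sgd_dist_def)
  fix A
  assume "A \<in> sets (sgd_dist eta theta (mvnormal mu S) k)"
  then have [measurable]: "A \<in> sets borel"
    by (simp add: sgd_dist_def)
  have [measurable]: "(\<lambda>xs. sgd_iter eta theta xs k) \<in> borel_measurable (\<Pi>\<^sub>M i\<in>{1..k}. mvnormal mu S)"
    by (rule measurable_sgd_iter) simp_all
  have "emeasure (sgd_dist eta theta (mvnormal mu S) k) A
      = (\<integral>\<^sup>+xs. indicator A (sgd_iter eta theta xs k) \<partial>(\<Pi>\<^sub>M i\<in>{1..k}. mvnormal mu S))"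
    by (simp add: sgd_dist_def emeasure_distr nn_integral_indicator[symmetric] nn_integral_distr
      del: nn_integral_indicator)
  also have "\<dots> = (\<integral>\<^sup>+z. indicator A z \<partial>mvnormal (sgd_mean eta mu theta k) (sgd_var eta k *\<^sub>R S))"
    by (rule nn_integral_sgd_iter[OF assms]) measurable
  also have "\<dots> = emeasure (mvnormal (sgd_mean eta mu theta k) (sgd_var eta k *\<^sub>R S)) A"
    by simp
  finally show "emeasure (sgd_dist eta theta (mvnormal mu S) k) A
      = emeasure (mvnormal (sgd_mean eta mu theta k) (sgd_var eta k *\<^sub>R S)) A" .
qed

lemma renyi_divergence_sgd_dist:
  fixes S :: "real^'n^'n"
  assumes S: "sym_pos_def_mat S" and "eta \<noteq> 0" and "2 * eta \<noteq> 1" and "k \<ge> 1" and "\<alpha> \<noteq> 1"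
  shows "renyi_divergence \<alpha> (sgd_dist eta theta1 (mvnormal mu S) k) (sgd_dist eta theta2 (mvnormal mu S) k)
    = ereal (\<alpha> * ((1 - 2 * eta) ^ k)\<^sup>2 * ((theta1 - theta2) \<bullet> (matrix_inv S *v (theta1 - theta2)))
        / (2 * sgd_var eta k))"
proof -
  define d where "d = theta1 - theta2"
  define q where "q = d \<bullet> (matrix_inv S *v d)"
  have "sgd_var eta k > 0"
    using sgd_var_pos assms(2,4) .
  then have "renyi_divergence \<alpha> (sgd_dist eta theta1 (mvnormal mu S) k) (sgd_dist eta theta2 (mvnormal mu S) k)
      = ereal (\<alpha> * (((1 - 2 * eta) ^ k *\<^sub>R d) \<bullet> (matrix_inv (sgd_var eta k *\<^sub>R S) *v ((1 - 2 * eta) ^ k *\<^sub>R d))) / 2)"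
    using assms by (simp add: sgd_dist_mvnormal renyi_divergence_mvnormal sym_pos_def_mat_scaleR sgd_mean_diff d_def)
  also have "\<dots> = ereal (\<alpha> * ((1 - 2 * eta) ^ k)\<^sup>2 * q / (2 * sgd_var eta k))"
    using S \<open>sgd_var eta k > 0\<close>
    by (simp add: matrix_inv_scaleR sym_pos_def_mat_invertible scaleR_matrix_vector_assoc[symmetric]
      matrix_vector_mult_scaleR q_def[symmetric] power2_eq_square field_simps)
  finally show ?thesis
    by (simp add: q_def d_def)
qed

theorem theorem1:
  fixes mu theta0 v :: "real^'n" and Sigma :: "real^'n^'n" and eta alpha :: real and k :: nat
  assumes "sym_pos_def_mat Sigma"
    and "0 < eta" and "eta < 1/2"
    and "k \<ge> 1"
    and "alpha > 1"
  shows "renyi_divergence alpha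
           (sgd_dist eta (theta0 - (2 * eta) *\<^sub>R (theta0 - v)) (mvnormal mu Sigma) k)
           (sgd_dist eta (theta0 - (2 * eta) *\<^sub>R (theta0 + v)) (mvnormal mu Sigma) k)
         \<le> ereal (2 * alpha / real k * (v \<bullet> (matrix_inv Sigma *v v)))"
proof -
  define s where "s = sgd_var eta k"
  define q where "q = v \<bullet> (matrix_inv Sigma *v v)"
  have "s > 0" and "real k * (2 * eta)\<^sup>2 * ((1 - 2 * eta) ^ k)\<^sup>2 \<le> s"
    using assms sgd_var_pos[of eta k] sgd_var_lower_bound[of eta k] by (simp_all add: s_def)
  have "q \<ge> 0"
    unfolding q_def using assms(1) by (intro sym_pos_def_mat_quadratic_form_nonneg sym_pos_def_mat_matrix_inv)
  have diff: "(theta0 - (2 * eta) *\<^sub>R (theta0 - v)) - (theta0 - (2 * eta) *\<^sub>R (theta0 + v)) = (4 * eta) *\<^sub>R v"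
    by (simp add: algebra_simps flip: scaleR_add_left)
  have "renyi_divergence alpha
           (sgd_dist eta (theta0 - (2 * eta) *\<^sub>R (theta0 - v)) (mvnormal mu Sigma) k)
           (sgd_dist eta (theta0 - (2 * eta) *\<^sub>R (theta0 + v)) (mvnormal mu Sigma) k)
      = ereal (alpha * ((1 - 2 * eta) ^ k)\<^sup>2 * (((4 * eta) *\<^sub>R v) \<bullet> (matrix_inv Sigma *v ((4 * eta) *\<^sub>R v))) / (2 * s))"
    unfolding s_def diff[symmetric] using assms by (intro renyi_divergence_sgd_dist) auto
  also have "\<dots> = ereal (2 * alpha / real k * q * (real k * (2 * eta)\<^sup>2 * ((1 - 2 * eta) ^ k)\<^sup>2 / s))"
    using assms \<open>s > 0\<close> by (simp add: matrix_vector_mult_scaleR q_def[symmetric] power2_eq_square field_simps)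
  also have "\<dots> \<le> ereal (2 * alpha / real k * q * 1)"
    unfolding ereal_less_eq(3)
    using assms \<open>s > 0\<close> \<open>q \<ge> 0\<close> \<open>real k * (2 * eta)\<^sup>2 * ((1 - 2 * eta) ^ k)\<^sup>2 \<le> s\<close>
    by (intro mult_left_mono) simp_all
  finally show ?thesis
    by (simp add: q_def)
qed

end
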